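(* Let $d\ge1$ and let $G$ be a $d$-regular triangle-free graph on $n$ vertices. Then for every $\lambda>0$, \[ \frac1n\log P_G(\lambda)\;\le\;\frac{1}{2d}\log P_{K_{d,d}}(\lambda)=\frac{1}{2d}\log\big(2(1+\lambda)^d-1\big). \] In particular ($\lambda=1$), $G$ has at most $\big(2^{d+1}-1\big)^{n/(2d)}$ independent sets.
   Context: For a graph $H$ and $\lambda>0$, $P_H(\lambda)=\sum_J\lambda^{|J|}$ summed over all independent sets $J$ of $H$ (including the empty set). $K_{d,d}$ is the complete bipartite graph with parts of size $d$. Logarithms are natural. *)

theory Defs
  imports Complex_Main
begin

definition simple_graph :: "'a set \<Rightarrow> ('a \<Rightarrow> 'a \<Rightarrow> bool) \<Rightarrow> bool" where
  "simple_graph V E \<longleftrightarrow> finite V \<and> (\<forall>u v. E u v \<longrightarrow> u \<in> V \<and> v \<in> V)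
     \<and> (\<forall>u v. E u v \<longrightarrow> E v u) \<and> (\<forall>v. \<not> E v v)"

definition regular_graph :: "'a set \<Rightarrow> ('a \<Rightarrow> 'a \<Rightarrow> bool) \<Rightarrow> nat \<Rightarrow> bool" where
  "regular_graph V E d \<longleftrightarrow> (\<forall>v\<in>V. card {u\<in>V. E v u} = d)"

definition triangle_free :: "'a set \<Rightarrow> ('a \<Rightarrow> 'a \<Rightarrow> bool) \<Rightarrow> bool" where
  "triangle_free V E \<longleftrightarrow> \<not> (\<exists>u\<in>V. \<exists>v\<in>V. \<exists>w\<in>V. E u v \<and> E v w \<and> E u w)"

definition indep_set :: "'a set \<Rightarrow> ('a \<Rightarrow> 'a \<Rightarrow> bool) \<Rightarrow> 'a set \<Rightarrow> bool" where
  "indep_set V E J \<longleftrightarrow> J \<subseteq> V \<and> (\<forall>u\<in>J. \<forall>v\<in>J. \<not> E u v)"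

definition indep_poly :: "'a set \<Rightarrow> ('a \<Rightarrow> 'a \<Rightarrow> bool) \<Rightarrow> real \<Rightarrow> real" where
  "indep_poly V E lam = (\<Sum>J\<in>{J. indep_set V E J}. lam ^ card J)"

definition Kdd_V :: "nat \<Rightarrow> nat set" where
  "Kdd_V d = {0..<2*d}"

definition Kdd_E :: "nat \<Rightarrow> nat \<Rightarrow> nat \<Rightarrow> bool" where
  "Kdd_E d i j \<longleftrightarrow> (i < d \<and> d \<le> j \<and> j < 2*d) \<or> (j < d \<and> d \<le> i \<and> i < 2*d)"

end

theory Submission
  imports Defs
begin

text \<open>Write \<open>P = P_G\<close>. The quantity \<open>t P'(t) / (n P(t))\<close> is the occupancy fraction of the
  hard-core model on \<open>G\<close>, and the claim follows by integrating the bound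
  \<open>P'(t) / (n P(t)) \<le> (1+t)^(d-1) / (2(1+t)^d - 1)\<close> from \<open>0\<close> to \<open>\<lambda>\<close>, the right-hand side being
  exactly the derivative of \<open>ln P_{K_{d,d}}(t) / (2d)\<close>.
  To prove the bound, fix a vertex \<open>v\<close> and group the independent sets \<open>I\<close> by \<open>J = I - N[v]\<close>.
  Given \<open>J\<close>, let \<open>U\<close> be the neighbours of \<open>v\<close> with no neighbour in \<open>J\<close>; since \<open>G\<close> is
  triangle-free, \<open>I \<inter> N[v]\<close> is either \<open>{v}\<close> or an arbitrary subset of \<open>U\<close>. On each such
  class an elementary inequality in \<open>|U| \<le> d\<close> bounds a suitable weighted count of
  \<open>v \<in> I\<close> and \<open>|I \<inter> N(v)|\<close>, and summing over all \<open>v\<close> with \<open>d\<close>-regularity turns that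
  weight into a multiple of \<open>|I|\<close>.\<close>

abbreviation indep_sets :: "'a set \<Rightarrow> ('a \<Rightarrow> 'a \<Rightarrow> bool) \<Rightarrow> 'a set set" where
  "indep_sets V E \<equiv> {J. indep_set V E J}"

abbreviation nbhd :: "'a set \<Rightarrow> ('a \<Rightarrow> 'a \<Rightarrow> bool) \<Rightarrow> 'a \<Rightarrow> 'a set" where
  "nbhd V E v \<equiv> {u\<in>V. E v u}"

lemma sum_power_card_Pow:
  fixes t :: "'b :: comm_semiring_1"
  assumes "finite U"
  shows "(\<Sum>S\<in>Pow U. t ^ card S) = (1 + t) ^ card U"
  using prod_add[OF assms, of "\<lambda>_. t" "\<lambda>_. 1"] by (simp add: add.commute)

lemma sum_card_mult_power_card_Pow:
  fixes t :: "'b :: comm_semiring_1"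
  assumes "finite U"
  shows "(\<Sum>S\<in>Pow U. of_nat (card S) * t ^ card S) = of_nat (card U) * t * (1 + t) ^ (card U - 1)"
  using assms
proof (induction U rule: finite_induct)
  case empty
  then show ?case by simp
next
  case (insert x U)
  have inj: "inj_on (insert x) (Pow U)"
    using insert.hyps by (intro inj_onI) (metis Pow_iff insert_absorb insert_ident subset_iff)
  have card_insert: "card (insert x S) = Suc (card S)" if "S \<in> Pow U" for S
    using insert.hyps that by (meson Pow_iff card_insert_disjoint finite_subset subset_iff)
  have "(\<Sum>S\<in>Pow (insert x U). of_nat (card S) * t ^ card S)
      = (\<Sum>S\<in>Pow U. of_nat (card S) * t ^ card S) + (\<Sum>S\<in>Pow U. of_nat (card (insert x S)) * t ^ card (insert x S))"
    unfolding Pow_insert using insert.hyps inj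
    by (subst sum.union_disjoint) (auto simp: sum.reindex)
  also have "\<dots> = (1 + t) * (\<Sum>S\<in>Pow U. of_nat (card S) * t ^ card S) + t * (1 + t) ^ card U"
    using insert.hyps
    by (simp add: card_insert sum.distrib algebra_simps flip: sum_distrib_left
        add: sum_power_card_Pow)
  finally show ?case
    using insert by (cases "card U") (simp_all add: algebra_simps)
qed

text \<open>Equivalently, \<open>(1 - x^-y) / y \<ge> (1 - x^-k) / k\<close> for \<open>1 \<le> y \<le> k\<close>.\<close>
lemma power_diff_ratio_le:
  fixes x :: real
  assumes "x \<ge> 1" "y \<le> k"
  shows "real y * (x ^ k - 1) * x ^ y \<le> real k * x ^ k * (x ^ y - 1)"
  using assms(2)
proof (induction k rule: dec_induct)
  case base
  then show ?case by simp
next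
  case (step k)
  have "x ^ y * (real y * (x - 1)) \<le> x ^ Suc k * (x ^ y - 1)"
  proof (rule mult_mono)
    show "x ^ y \<le> x ^ Suc k" using step assms(1) by (intro power_increasing) auto
    show "real y * (x - 1) \<le> x ^ y - 1"
      using Bernoulli_inequality[of "x - 1" y] assms(1) by simp
  qed (use assms(1) in auto)
  moreover have "x * (real y * (x ^ k - 1) * x ^ y) \<le> x * (real k * x ^ k * (x ^ y - 1))"
    using step assms(1) by (intro mult_left_mono) auto
  ultimately show ?case by (simp add: algebra_simps)
qed

lemma occupancy_weight_ineq:
  fixes t :: real
  assumes "t > 0" "y \<le> d" "d \<ge> 1"
  shows "(1 + t) ^ d + ((1 + t) ^ d - 1) / real d * real y * (1 + t) ^ (y - 1)
      \<le> (1 + t) ^ (d - 1) * (t + (1 + t) ^ y)"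
proof -
  define q where "q = 1 + t"
  have q: "q > 0" "q \<ge> 1" using assms(1) by (simp_all add: q_def)
  have dq: "real d * q > 0" using q assms(3) by simp
  have y_pow: "real y * q ^ (y - 1) * q = real y * q ^ y" by (cases y) auto
  have d_pow: "q ^ (d - 1) * q = q ^ d" using assms(3) by (cases d) auto
  have "real d * q * (q ^ d + (q ^ d - 1) / real d * real y * q ^ (y - 1))
      = real d * q ^ d * q + real d * ((q ^ d - 1) / real d) * (real y * q ^ (y - 1) * q)"
    by (simp add: algebra_simps)
  also have "\<dots> = real d * q ^ d * q + real y * (q ^ d - 1) * q ^ y"
    using assms(3) y_pow by simp
  also have "\<dots> \<le> real d * q ^ d * q + real d * q ^ d * (q ^ y - 1)"
    using power_diff_ratio_le[OF q(2) assms(2)] by simp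
  also have "\<dots> = real d * q ^ d * (t + q ^ y)"
    by (simp add: q_def algebra_simps)
  also have "\<dots> = real d * q * (q ^ (d - 1) * (t + q ^ y))"
    unfolding d_pow[symmetric] by (simp add: algebra_simps)
  finally show ?thesis
    using dq unfolding q_def by (simp add: mult_le_cancel_left_pos)
qed

lemma finite_indep_sets:
  assumes "simple_graph V E"
  shows "finite (indep_sets V E)"
proof (rule finite_subset)
  show "indep_sets V E \<subseteq> Pow V" by (auto simp: indep_set_def)
qed (use assms in \<open>simp add: simple_graph_def\<close>)

lemma indep_sets_fibre:
  assumes sg: "simple_graph V E" and tf: "triangle_free V E" and v: "v \<in> V"
    and J: "indep_set V E J" "J \<inter> insert v (nbhd V E v) = {}"
  shows "{I \<in> indep_sets V E. I - insert v (nbhd V E v) = J}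
       = insert (insert v J) ((\<union>) J ` Pow {u \<in> nbhd V E v. \<forall>x\<in>J. \<not> E u x})"
    (is "?fibre = insert (insert v J) ((\<union>) J ` Pow ?U)")
proof (intro equalityI subsetI)
  fix I
  assume "I \<in> ?fibre"
  then have I: "indep_set V E I" "I - insert v (nbhd V E v) = J" by auto
  show "I \<in> insert (insert v J) ((\<union>) J ` Pow ?U)"
  proof (cases "v \<in> I")
    case True
    then have "I \<inter> nbhd V E v = {}" using I(1) by (auto simp: indep_set_def)
    then show ?thesis using True I(2) by auto
  next
    case False
    then have "I = J \<union> (I \<inter> nbhd V E v)" and "I \<inter> nbhd V E v \<subseteq> ?U"
      using I by (auto simp: indep_set_def)
    then show ?thesis by blast
  qed
next
  have sym: "E a b \<Longrightarrow> E b a" and irrefl: "\<not> E a a" and inV: "E a b \<Longrightarrow> a \<in> V" for a b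
    using sg by (auto simp: simple_graph_def)
  fix I
  assume "I \<in> insert (insert v J) ((\<union>) J ` Pow ?U)"
  then consider "I = insert v J" | S where "S \<subseteq> ?U" "I = J \<union> S" by auto
  then show "I \<in> ?fibre"
  proof cases
    case 1
    then show ?thesis using J v sym irrefl by (auto simp: indep_set_def)
  next
    case (2 S)
    \<comment> \<open>two neighbours of \<open>v\<close> are never adjacent, since \<open>V\<close> is triangle-free\<close>
    have "\<not> E a b" if "a \<in> S" "b \<in> S" for a b
      using that 2(1) tf inV unfolding triangle_free_def by blast
    moreover have "\<not> E a b" if "a \<in> J" "b \<in> S" for a b
      using that 2(1) sym by blast
    ultimately show ?thesis using 2 J by (auto simp: indep_set_def)
  qed
qed

text \<open>The coefficients are chosen so that summing over the vertices of a \<open>d\<close>-regular graph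
  gives \<open>(2(1+t)^d - 1) |I|\<close>.\<close>
definition vertex_weight :: "'a set \<Rightarrow> ('a \<Rightarrow> 'a \<Rightarrow> bool) \<Rightarrow> nat \<Rightarrow> real \<Rightarrow> 'a \<Rightarrow> 'a set \<Rightarrow> real" where
  "vertex_weight V E d t v I =
     (1 + t) ^ d * of_bool (v \<in> I) + ((1 + t) ^ d - 1) / real d * real (card (I \<inter> nbhd V E v))"

lemma fibre_vertex_weight_le:
  fixes t :: real
  assumes sg: "simple_graph V E" and tf: "triangle_free V E" and v: "v \<in> V"
    and deg: "card (nbhd V E v) = d" and t: "t > 0" and d: "d \<ge> 1"
    and J: "indep_set V E J" "J \<inter> insert v (nbhd V E v) = {}"
  defines "F \<equiv> {I \<in> indep_sets V E. I - insert v (nbhd V E v) = J}"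
  shows "(\<Sum>I\<in>F. t ^ card I * vertex_weight V E d t v I) \<le> t * (1 + t) ^ (d - 1) * (\<Sum>I\<in>F. t ^ card I)"
proof -
  define U where "U = {u \<in> nbhd V E v. \<forall>x\<in>J. \<not> E u x}"
  define q where "q = 1 + t"
  have finV: "finite V" and irrefl: "\<not> E v v" using sg by (auto simp: simple_graph_def)
  have finJ: "finite J" using J(1) finV by (auto simp: indep_set_def intro: finite_subset)
  have finU: "finite U" using finV by (simp add: U_def)
  have y: "card U \<le> d" unfolding deg[symmetric] U_def using finV by (intro card_mono) auto
  have disj: "J \<inter> S = {}" "v \<notin> J \<union> S" "(J \<union> S) \<inter> nbhd V E v = S" if "S \<in> Pow U" for S
    using that J(2) irrefl by (auto simp: U_def)
  have card_Un: "card (J \<union> S) = card J + card S" if "S \<in> Pow U" for S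
    using that disj(1) finJ finU by (auto intro: card_Un_disjoint finite_subset)
  have sum_F: "sum f F = f (insert v J) + (\<Sum>S\<in>Pow U. f (J \<union> S))" for f :: "'a set \<Rightarrow> real"
  proof -
    have "inj_on ((\<union>) J) (Pow U)" using disj(1) by (intro inj_onI) blast
    moreover have "insert v J \<notin> (\<union>) J ` Pow U" using disj(2) by blast
    ultimately show ?thesis
      unfolding F_def indep_sets_fibre[OF sg tf v J] U_def[symmetric]
      by (simp add: finU sum.reindex)
  qed
  have card_vJ: "card (insert v J) = card J + 1" using J(2) finJ by simp
  have weight_vJ: "vertex_weight V E d t v (insert v J) = q ^ d"
    using J(2) irrefl by (auto simp: vertex_weight_def q_def)
  have weight_JS: "t ^ card (J \<union> S) * vertex_weight V E d t v (J \<union> S)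
      = t ^ card J * ((q ^ d - 1) / real d) * (real (card S) * t ^ card S)" if "S \<in> Pow U" for S
    using disj[OF that] card_Un[OF that] by (simp add: vertex_weight_def q_def power_add)
  have "(\<Sum>I\<in>F. t ^ card I * vertex_weight V E d t v I)
      = t ^ (card J + 1) * q ^ d
        + t ^ card J * ((q ^ d - 1) / real d) * (\<Sum>S\<in>Pow U. real (card S) * t ^ card S)"
    by (simp add: sum_F card_vJ weight_vJ weight_JS sum_distrib_left)
  also have "\<dots> = t ^ (card J + 1) * (q ^ d + (q ^ d - 1) / real d * real (card U) * q ^ (card U - 1))"
    using sum_card_mult_power_card_Pow[OF finU, of t] by (simp add: q_def algebra_simps)
  also have "\<dots> \<le> t ^ (card J + 1) * (q ^ (d - 1) * (t + q ^ card U))"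
    using occupancy_weight_ineq[OF t y d] t by (intro mult_left_mono) (simp_all add: q_def)
  also have "\<dots> = t * q ^ (d - 1) * (t ^ (card J + 1) + t ^ card J * (\<Sum>S\<in>Pow U. t ^ card S))"
    using sum_power_card_Pow[OF finU, of t] by (simp add: q_def algebra_simps)
  also have "\<dots> = t * (1 + t) ^ (d - 1) * (\<Sum>I\<in>F. t ^ card I)"
    by (simp add: sum_F card_vJ card_Un power_add sum_distrib_left q_def)
  finally show ?thesis .
qed

lemma vertex_weight_le:
  fixes t :: real
  assumes sg: "simple_graph V E" and tf: "triangle_free V E" and v: "v \<in> V"
    and deg: "card (nbhd V E v) = d" and t: "t > 0" and d: "d \<ge> 1"
  shows "(\<Sum>I\<in>indep_sets V E. t ^ card I * vertex_weight V E d t v I)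
      \<le> t * (1 + t) ^ (d - 1) * indep_poly V E t"
proof -
  define N where "N = insert v (nbhd V E v)"
  define T where "T = {J \<in> indep_sets V E. J \<inter> N = {}}"
  have fin: "finite (indep_sets V E)" "finite T"
    using finite_indep_sets[OF sg] by (auto simp: T_def)
  have restrict: "(\<lambda>I. I - N) ` indep_sets V E \<subseteq> T"
    by (auto simp: T_def indep_set_def)
  have "(\<Sum>I\<in>indep_sets V E. t ^ card I * vertex_weight V E d t v I)
      = (\<Sum>J\<in>T. \<Sum>I | I \<in> indep_sets V E \<and> I - N = J. t ^ card I * vertex_weight V E d t v I)"
    by (rule sum.group[OF fin restrict, symmetric])
  also have "\<dots> \<le> (\<Sum>J\<in>T. t * (1 + t) ^ (d - 1) * (\<Sum>I | I \<in> indep_sets V E \<and> I - N = J. t ^ card I))"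
    by (intro sum_mono) (use fibre_vertex_weight_le[OF sg tf v deg t d] in \<open>auto simp: T_def N_def\<close>)
  also have "\<dots> = t * (1 + t) ^ (d - 1) * indep_poly V E t"
    unfolding indep_poly_def sum.group[OF fin restrict, symmetric] by (simp add: sum_distrib_left)
  finally show ?thesis .
qed

lemma sum_card_Int_nbhd:
  assumes sg: "simple_graph V E" and reg: "regular_graph V E d" and I: "I \<subseteq> V"
  shows "(\<Sum>v\<in>V. card (I \<inter> nbhd V E v)) = d * card I"
proof -
  have finV: "finite V" and sym: "\<And>a b. E a b \<Longrightarrow> E b a" using sg by (auto simp: simple_graph_def)
  have finI: "finite I" using I finV by (rule finite_subset)
  have "(\<Sum>v\<in>V. card (I \<inter> nbhd V E v)) = (\<Sum>v\<in>V. \<Sum>u\<in>I. of_bool (E v u))"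
  proof (rule sum.cong[OF refl])
    fix v
    have "I \<inter> nbhd V E v = {u \<in> I. E v u}" using I by auto
    then show "card (I \<inter> nbhd V E v) = (\<Sum>u\<in>I. of_bool (E v u))"
      using finI by (simp add: sum.If_cases Int_def)
  qed
  also have "\<dots> = (\<Sum>u\<in>I. \<Sum>v\<in>V. of_bool (E v u))" by (rule sum.swap)
  also have "\<dots> = (\<Sum>u\<in>I. d)"
  proof (rule sum.cong[OF refl])
    fix u assume "u \<in> I"
    then have "card (nbhd V E u) = d" using I reg by (auto simp: regular_graph_def)
    moreover have "nbhd V E u = {v \<in> V. E v u}" using sym by blast
    ultimately show "(\<Sum>v\<in>V. of_bool (E v u)) = d" using finV by (simp add: sum.If_cases Int_def)
  qed
  finally show ?thesis by simp
qed

lemma sum_vertex_weight: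
  assumes sg: "simple_graph V E" and reg: "regular_graph V E d" and d: "d \<ge> 1" and I: "I \<subseteq> V"
  shows "(\<Sum>v\<in>V. vertex_weight V E d t v I) = (2 * (1 + t) ^ d - 1) * real (card I)"
proof -
  have finV: "finite V" using sg by (simp add: simple_graph_def)
  have "(\<Sum>v\<in>V. vertex_weight V E d t v I)
      = (1 + t) ^ d * (\<Sum>v\<in>V. of_bool (v \<in> I))
        + ((1 + t) ^ d - 1) / real d * (\<Sum>v\<in>V. real (card (I \<inter> nbhd V E v)))"
    by (simp add: vertex_weight_def sum.distrib sum_distrib_left)
  also have "(\<Sum>v\<in>V. of_bool (v \<in> I) :: real) = real (card I)"
    using I finV by (simp add: sum.If_cases Int_absorb1 flip: Int_def)
  also have "(\<Sum>v\<in>V. real (card (I \<inter> nbhd V E v))) = real d * real (card I)"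
    using sum_card_Int_nbhd[OF sg reg I] by (metis of_nat_mult of_nat_sum)
  also have "(1 + t) ^ d * real (card I) + ((1 + t) ^ d - 1) / real d * (real d * real (card I))
      = (2 * (1 + t) ^ d - 1) * real (card I)"
    using d by (simp add: field_simps)
  finally show ?thesis .
qed

lemma indep_poly_has_real_derivative:
  "(indep_poly V E has_real_derivative (\<Sum>I\<in>indep_sets V E. real (card I) * t ^ (card I - 1))) (at t)"
  unfolding indep_poly_def [abs_def] by (auto intro!: derivative_eq_intros)

lemma occupancy_bound:
  fixes t :: real
  assumes sg: "simple_graph V E" and tf: "triangle_free V E" and reg: "regular_graph V E d"
    and t: "t > 0" and d: "d \<ge> 1"
  shows "(2 * (1 + t) ^ d - 1) * (\<Sum>I\<in>indep_sets V E. real (card I) * t ^ (card I - 1))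
      \<le> (1 + t) ^ (d - 1) * real (card V) * indep_poly V E t"
proof -
  have deriv_mult_t: "t * (real k * (t ^ (k - Suc 0) * c)) = real k * (t ^ k * c)" for k c
    by (cases k) auto
  have "(2 * (1 + t) ^ d - 1) * (\<Sum>I\<in>indep_sets V E. real (card I) * t ^ (card I - 1)) * t
      = (\<Sum>I\<in>indep_sets V E. t ^ card I * ((2 * (1 + t) ^ d - 1) * real (card I)))"
    by (simp add: sum_distrib_left sum_distrib_right deriv_mult_t mult_ac)
  also have "\<dots> = (\<Sum>I\<in>indep_sets V E. t ^ card I * (\<Sum>v\<in>V. vertex_weight V E d t v I))"
    by (intro sum.cong) (auto simp: sum_vertex_weight[OF sg reg d] indep_set_def)
  also have "\<dots> = (\<Sum>v\<in>V. \<Sum>I\<in>indep_sets V E. t ^ card I * vertex_weight V E d t v I)"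
    by (simp add: sum_distrib_left sum.swap[of _ V])
  also have "\<dots> \<le> (\<Sum>v\<in>V. t * (1 + t) ^ (d - 1) * indep_poly V E t)"
    using reg by (intro sum_mono vertex_weight_le[OF sg tf _ _ t d]) (auto simp: regular_graph_def)
  also have "\<dots> = (1 + t) ^ (d - 1) * real (card V) * indep_poly V E t * t" by simp
  finally show ?thesis using t by simp
qed

lemma indep_poly_ge_1:
  assumes "simple_graph V E" "t \<ge> 0"
  shows "indep_poly V E t \<ge> 1"
proof -
  have "{} \<in> indep_sets V E" by (simp add: indep_set_def)
  then have "t ^ card ({} :: 'a set) \<le> indep_poly V E t"
    unfolding indep_poly_def using assms(2) finite_indep_sets[OF assms(1)]
    by (intro member_le_sum) auto
  then show ?thesis by simp
qed

lemma indep_poly_at_0: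
  assumes "simple_graph V E"
  shows "indep_poly V E 0 = 1"
proof -
  have "finite I" if "indep_set V E I" for I
    using that assms by (auto simp: indep_set_def simple_graph_def intro: finite_subset)
  then have "indep_poly V E 0 = (\<Sum>I\<in>indep_sets V E. of_bool (I = {}))"
    unfolding indep_poly_def by (intro sum.cong) auto
  also have "\<dots> = 1"
    using finite_indep_sets[OF assms] by (simp add: indep_set_def)
  finally show ?thesis .
qed

lemma ln_indep_poly_le:
  fixes lam :: real
  assumes sg: "simple_graph V E" and tf: "triangle_free V E" and reg: "regular_graph V E d"
    and d: "d \<ge> 1" and n: "card V = n" and lam: "lam > 0"
  shows "ln (indep_poly V E lam) / real n \<le> ln (2 * (1 + lam) ^ d - 1) / (2 * real d)"
proof (cases "n = 0")
  case True
  have "1 \<le> 2 * (1 + lam) ^ d - 1" using one_le_power[of "1 + lam" d] lam by linarith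
  then show ?thesis using True by simp
next
  case False
  define P' where "P' x = (\<Sum>I\<in>indep_sets V E. real (card I) * x ^ (card I - 1))" for x :: real
  define f where "f x = ln (2 * (1 + x) ^ d - 1) / (2 * real d) - ln (indep_poly V E x) / real n" for x
  have K: "2 * (1 + x) ^ d - 1 > 0" if "x \<ge> 0" for x :: real
    using one_le_power[of "1 + x" d] that by linarith
  have P: "indep_poly V E x > 0" if "x \<ge> 0" for x
    using indep_poly_ge_1[OF sg that] by simp
  have D: "(f has_real_derivative
      2 * real d * (1 + x) ^ (d - 1) / (2 * (1 + x) ^ d - 1) / (2 * real d)
      - 1 / indep_poly V E x * P' x / real n) (at x)" if "x \<ge> 0" for x
  proof -
    have "((\<lambda>x. ln (2 * (1 + x) ^ d - 1)) has_real_derivative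
        2 * real d * (1 + x) ^ (d - 1) / (2 * (1 + x) ^ d - 1)) (at x)"
      using K[OF that] by (auto intro!: derivative_eq_intros)
    moreover have "((\<lambda>x. ln (indep_poly V E x)) has_real_derivative 1 / indep_poly V E x * P' x) (at x)"
      unfolding P'_def by (rule DERIV_chain2[OF DERIV_ln_divide[OF P[OF that]] indep_poly_has_real_derivative])
    ultimately show ?thesis
      unfolding f_def by (intro DERIV_diff DERIV_cdivide)
  qed
  have "f 0 \<le> f lam"
  proof (rule DERIV_nonneg_imp_increasing_open[of 0 lam f])
    show "continuous_on {0..lam} f"
      using D by (intro continuous_at_imp_continuous_on ballI DERIV_isCont) auto
    fix x :: real
    assume x: "0 < x" "x < lam"
    have "(2 * (1 + x) ^ d - 1) * P' x \<le> (1 + x) ^ (d - 1) * real n * indep_poly V E x"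
      using occupancy_bound[OF sg tf reg x(1) d] by (simp add: P'_def n)
    then have "P' x / indep_poly V E x / real n \<le> (1 + x) ^ (d - 1) / (2 * (1 + x) ^ d - 1)"
      using K[of x] P[of x] x False by (simp add: divide_simps mult_ac)
    moreover have "2 * real d * (1 + x) ^ (d - 1) / (2 * (1 + x) ^ d - 1) / (2 * real d)
        = (1 + x) ^ (d - 1) / (2 * (1 + x) ^ d - 1)" using d by simp
    ultimately show "\<exists>y. (f has_real_derivative y) (at x) \<and> 0 \<le> y"
      using D[of x] x by force
  qed (use lam in simp)
  moreover have "f 0 = 0" by (simp add: f_def indep_poly_at_0[OF sg])
  ultimately show ?thesis unfolding f_def by linarith
qed

lemma card_indep_sets_le:
  assumes sg: "simple_graph V E" and tf: "triangle_free V E" and reg: "regular_graph V E d"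
    and d: "d \<ge> 1" and n: "card V = n"
  shows "real (card (indep_sets V E)) \<le> (2 ^ (d + 1) - 1) powr (real n / (2 * real d))"
proof (cases "n = 0")
  case True
  then have "V = {}" using n sg by (simp add: simple_graph_def)
  then have "indep_sets V E = {{}}" by (auto simp: indep_set_def)
  moreover have "(2 :: real) ^ (d + 1) \<noteq> 1" using one_le_power[of "2::real" d] by (simp; linarith)
  ultimately show ?thesis using True by simp
next
  case False
  have card_eq: "real (card (indep_sets V E)) = indep_poly V E 1"
    by (simp add: indep_poly_def)
  have "ln (indep_poly V E 1) / real n \<le> ln (2 ^ (d + 1) - 1) / (2 * real d)"
    using ln_indep_poly_le[OF sg tf reg d n, of 1] by simp
  then have "ln (indep_poly V E 1) \<le> real n / (2 * real d) * ln (2 ^ (d + 1) - 1)"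
    using False by (simp add: field_simps)
  moreover have base_pos: "(2 :: real) ^ (d + 1) - 1 > 0" using one_le_power[of "2::real" d] by (simp; linarith)
  ultimately have "ln (indep_poly V E 1) \<le> ln ((2 ^ (d + 1) - 1) powr (real n / (2 * real d)))"
    by simp
  then show ?thesis
    unfolding card_eq using indep_poly_ge_1[OF sg, of 1] base_pos
    by (subst (asm) ln_le_cancel_iff) auto
qed

lemma indep_sets_Kdd: "indep_sets (Kdd_V d) (Kdd_E d) = Pow {0..<d} \<union> Pow {d..<2 * d}"
proof (intro equalityI subsetI)
  fix J
  assume J: "J \<in> indep_sets (Kdd_V d) (Kdd_E d)"
  show "J \<in> Pow {0..<d} \<union> Pow {d..<2 * d}"
  proof (rule ccontr)
    assume "J \<notin> Pow {0..<d} \<union> Pow {d..<2 * d}"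
    moreover have "J \<subseteq> {0..<2 * d}" using J by (simp add: indep_set_def Kdd_V_def)
    ultimately obtain a b where "a \<in> J" "b \<in> J" "d \<le> a" "b < d"
      by (auto simp: subset_iff not_less)
    then show False using J by (auto simp: indep_set_def Kdd_V_def Kdd_E_def)
  qed
qed (auto simp: indep_set_def Kdd_V_def Kdd_E_def subset_iff)

lemma indep_poly_Kdd: "indep_poly (Kdd_V d) (Kdd_E d) t = 2 * (1 + t) ^ d - 1"
proof -
  have "{0..<d} \<inter> {d..<2 * d} = {}" by auto
  then have "Pow {0..<d} \<inter> Pow {d..<2 * d} = {{}}" by (simp flip: Pow_Int_eq)
  then have "indep_poly (Kdd_V d) (Kdd_E d) t + 1
      = (\<Sum>J\<in>Pow {0..<d}. t ^ card J) + (\<Sum>J\<in>Pow {d..<2 * d}. t ^ card J)"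
    unfolding indep_poly_def indep_sets_Kdd by (subst sum.union_inter [symmetric]) auto
  then show ?thesis by (simp add: sum_power_card_Pow)
qed

theorem mainTheorem9:
  fixes V :: "'a set" and E :: "'a \<Rightarrow> 'a \<Rightarrow> bool" and d n :: nat and lam :: real
  assumes "d \<ge> 1"
    and "simple_graph V E"
    and "regular_graph V E d"
    and "triangle_free V E"
    and "card V = n"
    and "lam > 0"
  shows "ln (indep_poly V E lam) / real n \<le> ln (indep_poly (Kdd_V d) (Kdd_E d) lam) / (2 * real d)
     \<and> indep_poly (Kdd_V d) (Kdd_E d) lam = 2 * (1 + lam) ^ d - 1
     \<and> real (card {J. indep_set V E J}) \<le> (2 ^ (d + 1) - 1) powr (real n / (2 * real d))"
  using ln_indep_poly_le[OF assms(2,4,3,1,5,6)] card_indep_sets_le[OF assms(2,4,3,1,5)]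
  by (simp add: indep_poly_Kdd)

end
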